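(* Consider a system of equations $x_i=f_i$ ($i=1,\dots,n$) over a directed set $\mathbb D$ where each right-hand side is monotonic, with dependence sets $\mathsf{dep}_i$ as below, and run algorithm SW (defined below) from an arbitrary initial mapping. (1) If every strictly ascending chain in $\mathbb D$ has length at most $h$, with $h\ge 1$, and $\Box=\sqcup$ is a binary upper bound operator, then SW terminates after at most $h\cdot N$ evaluations of right-hand sides, where $N=\sum_{i=1}^n(2+|\mathsf{dep}_i|)$. (2) If $\Box=\boxdot$, then SW terminates for any initial mapping and returns a post solution.
   Context: For each $i$, $\mathsf{dep}_i\subseteq\{x_1,\dots,x_n\}$ is a set such that $f_i\rho=f_i\rho'$ whenever $\rho,\rho'$ agree on $\mathsf{dep}_i$. Let $\mathsf{infl}_j=\{x_i\mid x_j\in\mathsf{dep}_i\}\cup\{x_j\}$. Algorithm SW (structured worklist) with operator $\Box$: maintain a priority queue $Q$ of unknowns (without duplicates; adding an element already present leaves $Q$ unchanged), initially containing all $x_1,\dots,x_n$. While $Q\ne\emptyset$: remove from $Q$ the unknown $x_i$ with the smallest index; compute $new:=\rho[x_i]\,\Box\, f_i\rho$; if $\rho[x_i]\ne new$, set $\rho[x_i]:=new$ and add every $x_j\in\mathsf{infl}_i$ to $Q$. A directed set is a poset in which any two elements have an upper bound; $\sqcup$ returns some upper bound. Monotonic: $\rho\sqsubseteq\rho'$ pointwise implies $f\rho\sqsubseteq f\rho'$. Post solution: $\rho[x_i]\sqsupseteq f_i\rho$ for all $i$. A widening operator $\nabla$ satisfies $a\sqsubseteq a\nabla b$, $b\sqsubseteq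 a\nabla b$, and there is no infinite sequence with $a_{i+1}=a_i\nabla b_i\neq a_i$ for all $i$. A narrowing operator $\triangle$ satisfies: $b\sqsubseteq a$ implies $b\sqsubseteq a\triangle b\sqsubseteq a$, and there is no infinite sequence with $b_i\sqsubseteq a_i$, $a_{i+1}=a_i\triangle b_i\ne a_i$ for all $i$. $a\boxdot b=a\triangle b$ if $b\sqsubseteq a$, else $a\nabla b$. *)

theory Defs
  imports Main
begin

text \<open>Unknowns x_1..x_n are represented by the indices 0..<n; a mapping is a function
  nat => 'a (values at indices >= n are irrelevant).\<close>

definition directed :: "'a::order itself \<Rightarrow> bool" where
  "directed _ \<longleftrightarrow> (\<forall>a b::'a. \<exists>c. a \<le> c \<and> b \<le> c)"

definition dep_ok :: "nat \<Rightarrow> (nat \<Rightarrow> nat set) \<Rightarrow> (nat \<Rightarrow> (nat \<Rightarrow> 'a) \<Rightarrow> 'a) \<Rightarrow> bool" where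
  "dep_ok n dep f \<longleftrightarrow> (\<forall>i<n. dep i \<subseteq> {..<n} \<and>
     (\<forall>\<rho> \<rho>'. (\<forall>j\<in>dep i. \<rho> j = \<rho>' j) \<longrightarrow> f i \<rho> = f i \<rho>'))"

definition infl :: "nat \<Rightarrow> (nat \<Rightarrow> nat set) \<Rightarrow> nat \<Rightarrow> nat set" where
  "infl n dep j = {i. i < n \<and> j \<in> dep i} \<union> {j}"

definition sw_step :: "nat \<Rightarrow> (nat \<Rightarrow> nat set) \<Rightarrow> ('a \<Rightarrow> 'a \<Rightarrow> 'a) \<Rightarrow>
    (nat \<Rightarrow> (nat \<Rightarrow> 'a) \<Rightarrow> 'a) \<Rightarrow> nat set \<times> (nat \<Rightarrow> 'a) \<Rightarrow> nat set \<times> (nat \<Rightarrow> 'a)" where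
  "sw_step n dep box f s =
     (let Q = fst s; \<rho> = snd s in
      if Q = {} then s else
      (let i = Min Q; new = box (\<rho> i) (f i \<rho>) in
       if \<rho> i \<noteq> new then ((Q - {i}) \<union> infl n dep i, \<rho>(i := new))
       else (Q - {i}, \<rho>)))"

definition sw_run :: "nat \<Rightarrow> (nat \<Rightarrow> nat set) \<Rightarrow> ('a \<Rightarrow> 'a \<Rightarrow> 'a) \<Rightarrow>
    (nat \<Rightarrow> (nat \<Rightarrow> 'a) \<Rightarrow> 'a) \<Rightarrow> (nat \<Rightarrow> 'a) \<Rightarrow> nat \<Rightarrow> nat set \<times> (nat \<Rightarrow> 'a)" where
  "sw_run n dep box f \<rho>0 k = (sw_step n dep box f ^^ k) ({..<n}, \<rho>0)"

definition upper_bound_op :: "('a::order \<Rightarrow> 'a \<Rightarrow> 'a) \<Rightarrow> bool" where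
  "upper_bound_op j \<longleftrightarrow> (\<forall>a b. a \<le> j a b \<and> b \<le> j a b)"

text \<open>Every strictly ascending chain c_0 < c_1 < ... < c_m has length (number of strict steps) m <= h.\<close>
definition chain_height_le :: "'a::order itself \<Rightarrow> nat \<Rightarrow> bool" where
  "chain_height_le _ h \<longleftrightarrow> (\<forall>(c::nat \<Rightarrow> 'a) m. (\<forall>k<m. c k < c (Suc k)) \<longrightarrow> m \<le> h)"

definition widening :: "('a::order \<Rightarrow> 'a \<Rightarrow> 'a) \<Rightarrow> bool" where
  "widening w \<longleftrightarrow> (\<forall>a b. a \<le> w a b \<and> b \<le> w a b) \<and>
     \<not> (\<exists>a b. \<forall>k::nat. a (Suc k) = w (a k) (b k) \<and> a (Suc k) \<noteq> a k)"

definition narrowing :: "('a::order \<Rightarrow> 'a \<Rightarrow> 'a) \<Rightarrow> bool" where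
  "narrowing nr \<longleftrightarrow> (\<forall>a b. b \<le> a \<longrightarrow> b \<le> nr a b \<and> nr a b \<le> a) \<and>
     \<not> (\<exists>a b. \<forall>k::nat. b k \<le> a k \<and> a (Suc k) = nr (a k) (b k) \<and> a (Suc k) \<noteq> a k)"

definition boxdot :: "('a::order \<Rightarrow> 'a \<Rightarrow> 'a) \<Rightarrow> ('a \<Rightarrow> 'a \<Rightarrow> 'a) \<Rightarrow> 'a \<Rightarrow> 'a \<Rightarrow> 'a" where
  "boxdot w nr a b = (if b \<le> a then nr a b else w a b)"

end

theory Submission
  imports Defs "HOL-Library.Infinite_Set"
begin

(* Part (1): an evaluation either removes an unknown from the queue, or strictly raises its
   value and enqueues the unknowns in its infl set. A value can be raised at most
   ascent_height times, so the potential |Q| + \<Sum>i. ascent_height (\<rho> i) * |infl i| drops with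
   every evaluation; initially it is at most h * \<Sum>i. (2 + |dep i|).

   Part (2): every unknown outside the queue satisfies its post-solution inequality, because it
   is re-enqueued whenever an unknown it depends on changes. By induction on m, the queue
   infinitely often contains no unknown below m. If from some step on an unknown up to m were
   always queued, then m would be evaluated and changed at infinitely many such visits.
   While f m \<rho> \<le> \<rho> m fails these changes are widening steps; once it holds at a visit, all
   unknowns up to m are post-solved, only they are updated from then on, and by monotonicity
   every update is a narrowing step that keeps them post-solved. Either way the operator would
   admit an infinite chain of changes. *)

lemma sw_run_0: "sw_run n dep box f \<rho>0 0 = ({..<n}, \<rho>0)"
  by (simp add: sw_run_def)

lemma sw_run_Suc: "sw_run n dep box f \<rho>0 (Suc k) = sw_step n dep box f (sw_run n dep box f \<rho>0 k)"
  by (simp add: sw_run_def)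

lemma sw_step_empty: "fst s = {} \<Longrightarrow> sw_step n dep box f s = s"
  by (simp add: sw_step_def)

lemma sw_step_fst:
  assumes "fst s \<noteq> {}"
  shows "fst (sw_step n dep box f s) =
    (if box (snd s (Min (fst s))) (f (Min (fst s)) (snd s)) = snd s (Min (fst s))
     then fst s - {Min (fst s)} else fst s - {Min (fst s)} \<union> infl n dep (Min (fst s)))"
  using assms by (simp add: sw_step_def Let_def)

lemma sw_step_snd:
  assumes "fst s \<noteq> {}"
  shows "snd (sw_step n dep box f s) =
    (snd s)(Min (fst s) := box (snd s (Min (fst s))) (f (Min (fst s)) (snd s)))"
  using assms by (auto simp add: sw_step_def Let_def)

lemma infl_subset: "i < n \<Longrightarrow> infl n dep i \<subseteq> {..<n}"
  by (auto simp: infl_def)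

lemma sw_step_queue_subset:
  assumes "fst s \<subseteq> {..<n}"
  shows "fst (sw_step n dep box f s) \<subseteq> {..<n}"
proof (cases "fst s = {}")
  case False
  have "finite (fst s)" using assms finite_subset by blast
  then have "Min (fst s) \<in> fst s" using False by (rule Min_in)
  with assms have "infl n dep (Min (fst s)) \<subseteq> {..<n}"
    by (intro infl_subset) blast
  with False assms show ?thesis by (auto simp: sw_step_fst)
qed (simp add: sw_step_empty assms)

section \<open>Termination with an upper bound operator\<close>

lemma funpow_reaches_within_measure:
  assumes step: "\<And>x. P x \<Longrightarrow> \<not> Q x \<Longrightarrow> P (g x) \<and> \<mu> (g x) < (\<mu> x :: nat)"
    and "P x"
  shows "\<exists>k \<le> \<mu> x. Q ((g ^^ k) x)"
  using \<open>P x\<close>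
proof (induction "\<mu> x" arbitrary: x rule: less_induct)
  case less
  show ?case
  proof (cases "Q x")
    case False
    with step less.prems have "P (g x)" "\<mu> (g x) < \<mu> x" by auto
    with less.hyps obtain k where "k \<le> \<mu> (g x)" "Q ((g ^^ k) (g x))" by blast
    with \<open>\<mu> (g x) < \<mu> x\<close> show ?thesis
      by (intro exI[of _ "Suc k"]) (simp add: funpow_Suc_right del: funpow.simps)
  qed (auto intro: exI[of _ 0])
qed

definition ascent_from :: "'a::order \<Rightarrow> nat \<Rightarrow> bool" where
  "ascent_from v m \<longleftrightarrow> (\<exists>c. c 0 = v \<and> (\<forall>k<m. c k < c (Suc k)))"

definition ascent_height :: "'a::order \<Rightarrow> nat" where
  "ascent_height v = (GREATEST m. ascent_from v m)"

lemma ascent_from_0: "ascent_from v 0"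
  by (auto simp: ascent_from_def)

lemma ascent_from_le_height:
  "chain_height_le TYPE('a::order) h \<Longrightarrow> ascent_from (v::'a) m \<Longrightarrow> m \<le> h"
  unfolding chain_height_le_def ascent_from_def by blast

lemma ascent_from_height:
  assumes "chain_height_le TYPE('a::order) h"
  shows "ascent_from (v::'a) (ascent_height v)"
  unfolding ascent_height_def
  by (rule GreatestI_nat[where P = "ascent_from v", OF ascent_from_0])
    (use ascent_from_le_height[OF assms] in blast)

lemma ascent_height_le:
  "chain_height_le TYPE('a::order) h \<Longrightarrow> ascent_height (v::'a) \<le> h"
  using ascent_from_height ascent_from_le_height by blast

lemma ascent_height_strict_antimono:
  assumes h: "chain_height_le TYPE('a::order) h" and "v < v'"
  shows "ascent_height v' < ascent_height (v::'a)"
proof -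
  obtain c where c: "c 0 = v'" "\<forall>k<ascent_height v'. c k < c (Suc k)"
    using ascent_from_height[OF h, of v'] by (auto simp: ascent_from_def)
  have "ascent_from v (Suc (ascent_height v'))"
    unfolding ascent_from_def
  proof (intro exI[of _ "\<lambda>k. if k = 0 then v else c (k - 1)"] conjI allI impI)
    fix k assume "k < Suc (ascent_height v')"
    with c \<open>v < v'\<close> show "(if k = 0 then v else c (k - 1)) < (if Suc k = 0 then v else c (Suc k - 1))"
      by (cases k) auto
  qed simp
  then have "Suc (ascent_height v') \<le> ascent_height v"
    unfolding ascent_height_def[of v]
    by (rule Greatest_le_nat) (use ascent_from_le_height[OF h] in blast)
  then show ?thesis by simp
qed

definition sw_potential :: "nat \<Rightarrow> (nat \<Rightarrow> nat set) \<Rightarrow> nat set \<times> (nat \<Rightarrow> 'a::order) \<Rightarrow> nat" where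
  "sw_potential n dep s = card (fst s) + (\<Sum>i<n. ascent_height (snd s i) * card (infl n dep i))"

lemma sw_potential_step_less:
  assumes ub: "upper_bound_op join" and h: "chain_height_le TYPE('a::order) h"
    and "fst s \<noteq> {}" and "fst s \<subseteq> {..<n}"
  shows "sw_potential n dep (sw_step n dep join f s) < sw_potential n dep (s :: nat set \<times> (nat \<Rightarrow> 'a))"
proof -
  obtain Q \<rho> where s: "s = (Q, \<rho>)" by fastforce
  with assms(3,4) have ne: "Q \<noteq> {}" and sub: "Q \<subseteq> {..<n}" by simp_all
  define i where "i = Min Q"
  define new where "new = join (\<rho> i) (f i \<rho>)"
  define c where "c = card (infl n dep i)"
  have fin: "finite Q" using sub finite_subset by blast
  then have "i \<in> Q" using ne by (simp add: i_def)
  with sub have "i < n" by blast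
  have card_rem: "card (Q - {i}) < card Q"
    using fin \<open>i \<in> Q\<close> by (rule card_Diff1_less)
  have split: "(\<Sum>j<n. ascent_height (\<sigma> j) * card (infl n dep j))
      = ascent_height (\<sigma> i) * c + (\<Sum>j\<in>{..<n} - {i}. ascent_height (\<rho> j) * card (infl n dep j))"
    if "\<forall>j. j \<noteq> i \<longrightarrow> \<sigma> j = \<rho> j" for \<sigma> :: "nat \<Rightarrow> 'a"
    using that \<open>i < n\<close> by (simp add: c_def sum.remove[of _ i])
  show ?thesis
  proof (cases "new = \<rho> i")
    case True
    then show ?thesis
      using ne card_rem by (simp add: s sw_step_fst sw_step_snd sw_potential_def i_def[symmetric] new_def[symmetric])
  next
    case False
    have "\<rho> i \<le> new" using ub by (simp add: upper_bound_op_def new_def)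
    with False have "ascent_height new < ascent_height (\<rho> i)"
      by (simp add: ascent_height_strict_antimono[OF h])
    then have weight: "ascent_height new * c + c \<le> ascent_height (\<rho> i) * c"
      by (metis add.commute mult_Suc mult_le_mono1 Suc_leI)
    have "card (Q - {i} \<union> infl n dep i) \<le> card (Q - {i}) + c"
      unfolding c_def by (rule card_Un_le)
    with card_rem have "card (Q - {i} \<union> infl n dep i) < card Q + c" by linarith
    with weight split[of "\<rho>(i := new)"] split[of \<rho>] False ne show ?thesis
      by (simp add: s sw_step_fst sw_step_snd sw_potential_def i_def[symmetric] new_def[symmetric])
  qed
qed

lemma sum_card_infl_le:
  assumes "\<forall>j<n. dep j \<subseteq> {..<n}"
  shows "(\<Sum>i<n. card (infl n dep i)) \<le> n + (\<Sum>j<n. card (dep j))"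
proof -
  have "card (infl n dep i) \<le> card {j \<in> {..<n}. i \<in> dep j} + 1" for i
    unfolding infl_def using card_Un_le[of "{j \<in> {..<n}. i \<in> dep j}" "{i}"] by simp
  then have "(\<Sum>i<n. card (infl n dep i)) \<le> (\<Sum>i<n. card {j \<in> {..<n}. i \<in> dep j} + 1)"
    by (intro sum_mono)
  also have "\<dots> = (\<Sum>i<n. card {j \<in> {..<n}. i \<in> dep j}) + n"
    unfolding sum.distrib by simp
  also have "(\<Sum>i<n. card {j \<in> {..<n}. i \<in> dep j}) = (\<Sum>j<n. card (dep j))"
  proof (rule sum_multicount_gen)
    show "\<forall>j\<in>{..<n}. card {i \<in> {..<n}. i \<in> dep j} = card (dep j)"
      using assms by (intro ballI arg_cong[where f = card]) auto
  qed auto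
  finally show ?thesis by simp
qed

theorem sw_join_terminates:
  assumes dep: "\<forall>j<n. dep j \<subseteq> {..<n}" and ub: "upper_bound_op join"
    and h: "chain_height_le TYPE('a::order) h" and "1 \<le> h"
  shows "\<exists>k \<le> h * (\<Sum>i<n. 2 + card (dep i)). fst (sw_run n dep join f (\<rho>0 :: nat \<Rightarrow> 'a) k) = {}"
proof -
  let ?\<mu> = "sw_potential n dep :: nat set \<times> (nat \<Rightarrow> 'a) \<Rightarrow> nat"
  have "\<exists>k \<le> ?\<mu> ({..<n}, \<rho>0). fst ((sw_step n dep join f ^^ k) ({..<n}, \<rho>0)) = {}"
  proof (rule funpow_reaches_within_measure[where P = "\<lambda>s. fst s \<subseteq> {..<n}"])
    fix s :: "nat set \<times> (nat \<Rightarrow> 'a)"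
    assume "fst s \<subseteq> {..<n}" "fst s \<noteq> {}"
    then show "fst (sw_step n dep join f s) \<subseteq> {..<n} \<and> ?\<mu> (sw_step n dep join f s) < ?\<mu> s"
      using sw_step_queue_subset sw_potential_step_less[OF ub h] by blast
  qed simp
  moreover have "?\<mu> ({..<n}, \<rho>0) \<le> h * (\<Sum>i<n. 2 + card (dep i))"
  proof -
    have "(\<Sum>i<n. ascent_height (\<rho>0 i) * card (infl n dep i)) \<le> (\<Sum>i<n. h * card (infl n dep i))"
      by (intro sum_mono mult_le_mono1 ascent_height_le[OF h])
    also have "\<dots> \<le> h * (n + (\<Sum>j<n. card (dep j)))"
      by (simp add: sum_distrib_left[symmetric] sum_card_infl_le[OF dep])
    finally have "?\<mu> ({..<n}, \<rho>0) \<le> n + h * n + h * (\<Sum>j<n. card (dep j))"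
      by (simp add: sw_potential_def algebra_simps)
    also have "\<dots> \<le> h * (2 * n + (\<Sum>j<n. card (dep j)))"
      using \<open>1 \<le> h\<close> by (simp add: algebra_simps)
    also have "\<dots> = h * (\<Sum>i<n. 2 + card (dep i))"
      unfolding sum.distrib by simp
    finally show ?thesis .
  qed
  ultimately show ?thesis
    unfolding sw_run_def by (meson order_trans)
qed

section \<open>Termination with widening and narrowing\<close>

definition sw_invariant :: "nat \<Rightarrow> (nat \<Rightarrow> (nat \<Rightarrow> 'a::order) \<Rightarrow> 'a) \<Rightarrow> nat set \<times> (nat \<Rightarrow> 'a) \<Rightarrow> bool" where
  "sw_invariant n f s \<longleftrightarrow> fst s \<subseteq> {..<n} \<and> (\<forall>j<n. j \<notin> fst s \<longrightarrow> f j (snd s) \<le> snd s j)"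

lemma sw_invariant_step:
  assumes stable: "\<And>a b. box a b = a \<Longrightarrow> b \<le> a" and dep: "dep_ok n dep f"
    and inv: "sw_invariant n f s"
  shows "sw_invariant n f (sw_step n dep box f s)"
proof (cases "fst s = {}")
  case False
  define i where "i = Min (fst s)"
  define new where "new = box (snd s i) (f i (snd s))"
  have "finite (fst s)"
    using inv finite_subset unfolding sw_invariant_def by blast
  then have "i \<in> fst s" unfolding i_def using False by (rule Min_in)
  show ?thesis
  proof (cases "new = snd s i")
    case True
    with stable have "f i (snd s) \<le> snd s i" by (simp add: new_def)
    with True False inv show ?thesis
      by (auto simp: sw_invariant_def sw_step_fst sw_step_snd i_def[symmetric] new_def[symmetric])
  next
    case changed: False
    have "f j ((snd s)(i := new)) \<le> ((snd s)(i := new)) j"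
      if "j < n" "j \<notin> fst s - {i} \<union> infl n dep i" for j
    proof -
      from that have "j \<noteq> i" "i \<notin> dep j" "j \<notin> fst s" by (auto simp: infl_def)
      with dep \<open>j < n\<close> have "f j ((snd s)(i := new)) = f j (snd s)"
        unfolding dep_ok_def by (simp add: fun_upd_other)
      with inv \<open>j < n\<close> \<open>j \<notin> fst s\<close> \<open>j \<noteq> i\<close> show ?thesis
        by (simp add: sw_invariant_def)
    qed
    moreover have "i < n" using inv \<open>i \<in> fst s\<close> by (auto simp: sw_invariant_def)
    ultimately show ?thesis
      using changed False inv infl_subset[of i n dep]
      by (auto simp: sw_invariant_def sw_step_fst sw_step_snd i_def[symmetric] new_def[symmetric])
  qed
qed (simp add: sw_step_empty inv)

lemma sw_invariant_run:
  assumes "\<And>a b. box a b = a \<Longrightarrow> b \<le> a" and "dep_ok n dep f"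
  shows "sw_invariant n f (sw_run n dep box f \<rho>0 k)"
proof (induction k)
  case (Suc k)
  show ?case
    using sw_invariant_step[OF assms Suc.IH] by (simp add: sw_run_Suc)
qed (simp add: sw_run_0 sw_invariant_def)

lemma boxdot_eq_left_imp_le:
  assumes "widening w" and "boxdot w nr a b = a"
  shows "b \<le> a"
  using assms by (metis boxdot_def widening_def)

lemma boxdot_no_infinite_change:
  assumes W: "widening w" and N: "narrowing nr"
    and step: "\<And>j. a (Suc j) = boxdot w nr (a j) (b j)"
    and change: "\<And>j. a (Suc j) \<noteq> a j"
    and stays_below: "\<And>j. b j \<le> a j \<Longrightarrow> b (Suc j) \<le> a (Suc j)"
  shows False
proof (cases "\<exists>j0. b j0 \<le> a j0")
  case False
  with step change have "\<forall>j. a (Suc j) = w (a j) (b j) \<and> a (Suc j) \<noteq> a j"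
    by (simp add: boxdot_def)
  with W show False unfolding widening_def by blast
next
  case True
  then obtain j0 where "b j0 \<le> a j0" by blast
  then have below: "b (j + j0) \<le> a (j + j0)" for j
    by (induction j) (simp_all add: stays_below)
  define a' where "a' j = a (j + j0)" for j
  define b' where "b' j = b (j + j0)" for j
  have "b' j \<le> a' j \<and> a' (Suc j) = nr (a' j) (b' j) \<and> a' (Suc j) \<noteq> a' j" for j
  proof -
    have "a (Suc (j + j0)) = nr (a (j + j0)) (b (j + j0))"
      using step[of "j + j0"] below[of j] by (simp add: boxdot_def)
    with below[of j] change[of "j + j0"] show ?thesis
      by (simp add: a'_def b'_def)
  qed
  with N show False unfolding narrowing_def by blast
qed

lemma enumerate_Suc_eq_if_constant_outside:
  assumes "infinite T" and "\<forall>k\<in>T. start \<le> k"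
    and const: "\<And>k. start \<le> k \<Longrightarrow> k \<notin> T \<Longrightarrow> c (Suc k) = c k"
  shows "c (enumerate T (Suc j)) = c (Suc (enumerate T j))"
proof -
  let ?t = "enumerate T"
  have gap: "k \<notin> T" if "?t j < k" "k < ?t (Suc j)" for k
    using that not_less_Least[of k "\<lambda>s. s \<in> T \<and> ?t j < s"]
    by (simp add: enumerate_Suc''[OF \<open>infinite T\<close>])
  have "Suc (?t j) + d \<le> ?t (Suc j) \<Longrightarrow> c (Suc (?t j) + d) = c (Suc (?t j))" for d
  proof (induction d)
    case (Suc d)
    have "start \<le> ?t j" using assms enumerate_in_set by blast
    with Suc gap[of "Suc (?t j) + d"] const[of "Suc (?t j) + d"] show ?case by simp
  qed simp
  moreover obtain d where "?t (Suc j) = Suc (?t j) + d"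
    using enumerate_step[OF \<open>infinite T\<close>, of j] less_iff_Suc_add by auto
  ultimately show ?thesis by simp
qed

lemma narrowing_update_preserves_post:
  assumes N: "narrowing nr" and mono: "\<And>i. i \<le> m \<Longrightarrow> mono (f i)"
    and post: "\<forall>i\<le>m. f i \<rho> \<le> (\<rho> i :: 'a::order)" and "i0 \<le> m"
  shows "\<forall>i\<le>m. f i (\<rho>(i0 := boxdot w nr (\<rho> i0) (f i0 \<rho>))) \<le> (\<rho>(i0 := boxdot w nr (\<rho> i0) (f i0 \<rho>))) i"
proof (intro allI impI)
  define new where "new = boxdot w nr (\<rho> i0) (f i0 \<rho>)"
  have "f i0 \<rho> \<le> \<rho> i0" using post \<open>i0 \<le> m\<close> by simp
  with N have "f i0 \<rho> \<le> new" "new \<le> \<rho> i0"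
    by (simp_all add: new_def boxdot_def narrowing_def)
  then have smaller: "\<rho>(i0 := new) \<le> \<rho>" by (simp add: le_fun_def)
  fix i assume "i \<le> m"
  with mono smaller have "f i (\<rho>(i0 := new)) \<le> f i \<rho>" by (simp add: monoD)
  with post \<open>i \<le> m\<close> \<open>f i0 \<rho> \<le> new\<close> show "f i (\<rho>(i0 := new)) \<le> (\<rho>(i0 := new)) i"
    unfolding new_def[symmetric] by (cases "i = i0") (auto intro: order_trans)
qed

locale sw_boxdot_run =
  fixes n :: nat and dep :: "nat \<Rightarrow> nat set" and f :: "nat \<Rightarrow> (nat \<Rightarrow> 'a::order) \<Rightarrow> 'a"
    and w nr :: "'a \<Rightarrow> 'a \<Rightarrow> 'a" and \<rho>0 :: "nat \<Rightarrow> 'a"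
  assumes mono: "\<forall>i<n. mono (f i)" and dep: "dep_ok n dep f"
    and widening: "widening w" and narrowing: "narrowing nr"
begin

abbreviation queue :: "nat \<Rightarrow> nat set" where
  "queue k \<equiv> fst (sw_run n dep (boxdot w nr) f \<rho>0 k)"

abbreviation val :: "nat \<Rightarrow> nat \<Rightarrow> 'a" where
  "val k \<equiv> snd (sw_run n dep (boxdot w nr) f \<rho>0 k)"

lemma invariant: "sw_invariant n f (sw_run n dep (boxdot w nr) f \<rho>0 k)"
  using sw_invariant_run[OF boxdot_eq_left_imp_le[OF widening] dep] .

lemma finite_queue: "finite (queue k)"
  using invariant[of k] finite_subset unfolding sw_invariant_def by blast

context
  fixes m k0 :: nat
  assumes m_less: "m < n" and busy: "\<And>k. k0 \<le> k \<Longrightarrow> queue k \<inter> {..m} \<noteq> {}"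
begin

abbreviation visits :: "nat set" where
  "visits \<equiv> {k. k0 \<le> k \<and> queue k \<inter> {..<m} = {}}"

lemma queue_nonempty_Min_le:
  assumes "k0 \<le> k"
  shows "queue k \<noteq> {}" and "Min (queue k) \<le> m"
proof -
  from busy[OF assms] obtain x where x: "x \<in> queue k" "x \<le> m" by blast
  then show "queue k \<noteq> {}" by blast
  have "Min (queue k) \<le> x" using finite_queue x(1) by (rule Min_le)
  with x(2) show "Min (queue k) \<le> m" by simp
qed

lemma Min_queue_visit:
  assumes "k \<in> visits"
  shows "Min (queue k) = m"
proof -
  have "k0 \<le> k" using assms by simp
  have "Min (queue k) \<in> queue k"
    using finite_queue queue_nonempty_Min_le(1)[OF \<open>k0 \<le> k\<close>] by (rule Min_in)
  with assms have "\<not> Min (queue k) < m" by blast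
  with queue_nonempty_Min_le(2)[OF \<open>k0 \<le> k\<close>] show ?thesis by simp
qed

lemma val_Suc:
  assumes "k0 \<le> k"
  shows "val (Suc k) = (val k)(Min (queue k) :=
    boxdot w nr (val k (Min (queue k))) (f (Min (queue k)) (val k)))"
  using queue_nonempty_Min_le(1)[OF assms] by (simp add: sw_run_Suc sw_step_snd)

lemma val_visit:
  assumes "k \<in> visits"
  shows "val (Suc k) m = boxdot w nr (val k m) (f m (val k))" and "val (Suc k) m \<noteq> val k m"
proof -
  show eq: "val (Suc k) m = boxdot w nr (val k m) (f m (val k))"
    using val_Suc Min_queue_visit[OF assms] assms by simp
  show "val (Suc k) m \<noteq> val k m"
  proof
    assume "val (Suc k) m = val k m"
    with eq have "queue (Suc k) = queue k - {m}"
      using queue_nonempty_Min_le(1) Min_queue_visit[OF assms] assms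
      by (simp add: sw_run_Suc sw_step_fst)
    with assms have "queue (Suc k) \<inter> {..m} = {}" by auto
    with busy assms show False by simp
  qed
qed

lemma val_off_visits:
  assumes "k0 \<le> k" and "k \<notin> visits"
  shows "val (Suc k) m = val k m"
proof -
  have "Min (queue k) \<noteq> m"
  proof
    assume "Min (queue k) = m"
    then have "\<forall>x\<in>queue k. m \<le> x"
      using Min_le[OF finite_queue] by metis
    then have "queue k \<inter> {..<m} = {}" by auto
    with assms show False by blast
  qed
  with val_Suc[OF assms(1)] show ?thesis by simp
qed

lemma post_upto_persists:
  assumes "k0 \<le> k" and "k \<le> k'" and "\<forall>i\<le>m. f i (val k) \<le> val k i"
  shows "\<forall>i\<le>m. f i (val k') \<le> val k' i"
  using \<open>k \<le> k'\<close>
proof (induction k' rule: dec_induct)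
  case (step k')
  with assms(1) have "k0 \<le> k'" by simp
  have "\<And>i. i \<le> m \<Longrightarrow> mono (f i)" using mono m_less by simp
  from narrowing_update_preserves_post[OF narrowing this step.IH queue_nonempty_Min_le(2)[OF \<open>k0 \<le> k'\<close>]]
  show ?case by (simp add: val_Suc[OF \<open>k0 \<le> k'\<close>])
qed (use assms in simp)

lemma post_upto_visit:
  assumes "k \<in> visits" and "f m (val k) \<le> val k m"
  shows "\<forall>i\<le>m. f i (val k) \<le> val k i"
proof (intro allI impI)
  fix i assume "i \<le> m"
  show "f i (val k) \<le> val k i"
  proof (cases "i = m")
    case False
    with \<open>i \<le> m\<close> assms(1) have "i \<notin> queue k" "i < n" using m_less by auto
    with invariant[of k] show ?thesis by (simp add: sw_invariant_def)
  qed (use assms in simp)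
qed

lemma finite_visits: "finite visits"
proof (rule ccontr)
  assume inf: "infinite visits"
  let ?t = "enumerate visits"
  have visit: "?t j \<in> visits" for j
    using inf by (rule enumerate_in_set)
  have "\<forall>k\<in>visits. k0 \<le> k" by blast
  from enumerate_Suc_eq_if_constant_outside[of visits k0 "\<lambda>k. val k m", OF inf this val_off_visits]
  have next_val: "val (?t (Suc j)) m = val (Suc (?t j)) m" for j
    by simp
  show False
  proof (rule boxdot_no_infinite_change[OF widening narrowing,
        where a = "\<lambda>j. val (?t j) m" and b = "\<lambda>j. f m (val (?t j))"])
    fix j
    show "val (?t (Suc j)) m = boxdot w nr (val (?t j) m) (f m (val (?t j)))"
      using next_val val_visit(1)[OF visit] by simp
    show "val (?t (Suc j)) m \<noteq> val (?t j) m"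
      using next_val val_visit(2)[OF visit] by simp
    assume "f m (val (?t j)) \<le> val (?t j) m"
    have "k0 \<le> ?t j" using visit[of j] by simp
    moreover have "?t j \<le> ?t (Suc j)" using enumerate_step[OF inf] by (rule less_imp_le)
    moreover have "\<forall>i\<le>m. f i (val (?t j)) \<le> val (?t j) i"
      using visit \<open>f m (val (?t j)) \<le> val (?t j) m\<close> by (rule post_upto_visit)
    ultimately have "\<forall>i\<le>m. f i (val (?t (Suc j))) \<le> val (?t (Suc j)) i"
      by (rule post_upto_persists)
    then show "f m (val (?t (Suc j))) \<le> val (?t (Suc j)) m" by simp
  qed
qed

end

lemma queue_eventually_clears_below: "m \<le> n \<Longrightarrow> \<exists>k\<ge>k0. queue k \<inter> {..<m} = {}"
proof (induction m arbitrary: k0)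
  case (Suc m)
  show ?case
  proof (rule ccontr)
    assume "\<not> ?case"
    then have busy: "\<And>k. k0 \<le> k \<Longrightarrow> queue k \<inter> {..m} \<noteq> {}"
      by (auto simp: lessThan_Suc_atMost)
    have "\<exists>k'\<ge>k. k' \<in> {k. k0 \<le> k \<and> queue k \<inter> {..<m} = {}}" for k
      using Suc.IH[of "max k k0"] Suc.prems by auto
    then have "infinite {k. k0 \<le> k \<and> queue k \<inter> {..<m} = {}}"
      by (simp add: infinite_nat_iff_unbounded_le)
    with finite_visits[of m k0] busy Suc.prems show False by simp
  qed
qed auto

theorem eventually_post_solution: "\<exists>k. queue k = {} \<and> (\<forall>i<n. f i (val k) \<le> val k i)"
proof -
  obtain k where "queue k \<inter> {..<n} = {}"
    using queue_eventually_clears_below[of n 0] by auto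
  with invariant[of k] have "queue k = {}"
    unfolding sw_invariant_def by blast
  with invariant[of k] show ?thesis
    unfolding sw_invariant_def by auto
qed

end

theorem mainTheorem5:
  fixes n :: nat
    and f :: "nat \<Rightarrow> (nat \<Rightarrow> 'a::order) \<Rightarrow> 'a"
    and dep :: "nat \<Rightarrow> nat set"
    and \<rho>0 :: "nat \<Rightarrow> 'a"
  assumes "directed TYPE('a)"
    and "\<forall>i<n. mono (f i)"
    and "dep_ok n dep f"
  shows "(\<forall>join h. upper_bound_op join \<and> chain_height_le TYPE('a) h \<and> h \<ge> 1 \<longrightarrow>
            (\<exists>k \<le> h * (\<Sum>i<n. 2 + card (dep i)). fst (sw_run n dep join f \<rho>0 k) = {}))
       \<and> (\<forall>w nr. widening w \<and> narrowing nr \<longrightarrow>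
            (\<forall>\<rho>. \<exists>k. fst (sw_run n dep (boxdot w nr) f \<rho> k) = {} \<and>
                 (\<forall>i<n. f i (snd (sw_run n dep (boxdot w nr) f \<rho> k))
                         \<le> snd (sw_run n dep (boxdot w nr) f \<rho> k) i)))"
proof (intro conjI allI impI)
  fix join :: "'a \<Rightarrow> 'a \<Rightarrow> 'a" and h :: nat
  assume "upper_bound_op join \<and> chain_height_le TYPE('a) h \<and> h \<ge> 1"
  moreover have "\<forall>j<n. dep j \<subseteq> {..<n}"
    using assms(3) by (simp add: dep_ok_def)
  ultimately show "\<exists>k \<le> h * (\<Sum>i<n. 2 + card (dep i)). fst (sw_run n dep join f \<rho>0 k) = {}"
    using sw_join_terminates by blast
next
  fix w nr :: "'a \<Rightarrow> 'a \<Rightarrow> 'a" and \<rho>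
  assume "widening w \<and> narrowing nr"
  with assms(2,3) have "sw_boxdot_run n dep f w nr"
    by unfold_locales auto
  then show "\<exists>k. fst (sw_run n dep (boxdot w nr) f \<rho> k) = {} \<and>
      (\<forall>i<n. f i (snd (sw_run n dep (boxdot w nr) f \<rho> k)) \<le> snd (sw_run n dep (boxdot w nr) f \<rho> k) i)"
    by (rule sw_boxdot_run.eventually_post_solution)
qed

end
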